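(* Let $X$ be a locally compact, Hausdorff, second countable space and $(Y,d)$ a metric space. Then the topologies $\tau_{co}$ and $\tau_{cc}$ coincide on $C_{od}(X,Y)$.
   Context: $C_{od}(X,Y)$ is the set of continuous functions $f:\mathrm{dom}(f)\to Y$ whose domain is an open subset of $X$ (including the empty function), and $C_{od}^\star(X,Y)=C_{od}(X,Y)\setminus\{\emptyset\}$. The topology $\tau_{co}$ on $C_{od}(X,Y)$ is generated by the subbasic sets $\langle K,V\rangle=\{f: K\subseteq\mathrm{dom}(f),\ f(K)\subseteq V\}$, $K\subseteq X$ compact, $V\subseteq Y$ open. For a nonempty compact $K\subseteq\mathrm{dom}(f)\cap\mathrm{dom}(g)$, $d_K(f,g)=\sup_{x\in K}d(f(x),g(x))$; for $f\in C_{od}^\star(X,Y)$, nonempty compact $K\subseteq\mathrm{dom}(f)$ and $\epsilon>0$, $B_K(f,\epsilon)=\{g\in C_{od}^\star(X,Y): K\subseteq\mathrm{dom}(g),\ d_K(f,g)<\epsilon\}$. The topology of compact convergence $\tau_{cc}$ is the topology having as basis all sets $B_K(f,\epsilon)$ together with $C_{od}(X,Y)$. *)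

theory Defs
  imports "HOL-Analysis.Analysis"
begin

text \<open>Partial functions X -> Y are modelled as maps 'a => 'b option; dom f is the domain.
  Y is the metric space (M,d), with topology mtopology.\<close>

definition Cod :: "'a topology \<Rightarrow> 'b set \<Rightarrow> ('b \<Rightarrow> 'b \<Rightarrow> real) \<Rightarrow> ('a \<Rightarrow> 'b option) set" where
  "Cod X M d = {f. openin X (dom f) \<and>
      continuous_map (subtopology X (dom f)) (Metric_space.mtopology M d) (\<lambda>x. the (f x))}"

definition Cod_star :: "'a topology \<Rightarrow> 'b set \<Rightarrow> ('b \<Rightarrow> 'b \<Rightarrow> real) \<Rightarrow> ('a \<Rightarrow> 'b option) set" where
  "Cod_star X M d = Cod X M d - {Map.empty}"

definition co_sub :: "'a topology \<Rightarrow> 'b set \<Rightarrow> ('b \<Rightarrow> 'b \<Rightarrow> real) \<Rightarrow> 'a set \<Rightarrow> 'b set \<Rightarrow> ('a \<Rightarrow> 'b option) set" where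
  "co_sub X M d K V = {f \<in> Cod X M d. K \<subseteq> dom f \<and> (\<forall>x\<in>K. the (f x) \<in> V)}"

definition tau_co :: "'a topology \<Rightarrow> 'b set \<Rightarrow> ('b \<Rightarrow> 'b \<Rightarrow> real) \<Rightarrow> ('a \<Rightarrow> 'b option) topology" where
  "tau_co X M d = topology_generated_by
     {co_sub X M d K V | K V. compactin X K \<and> openin (Metric_space.mtopology M d) V}"

definition dK :: "('b \<Rightarrow> 'b \<Rightarrow> real) \<Rightarrow> 'a set \<Rightarrow> ('a \<Rightarrow> 'b option) \<Rightarrow> ('a \<Rightarrow> 'b option) \<Rightarrow> real" where
  "dK d K f g = (SUP x\<in>K. d (the (f x)) (the (g x)))"

definition BK :: "'a topology \<Rightarrow> 'b set \<Rightarrow> ('b \<Rightarrow> 'b \<Rightarrow> real) \<Rightarrow> 'a set \<Rightarrow> ('a \<Rightarrow> 'b option) \<Rightarrow> real \<Rightarrow> ('a \<Rightarrow> 'b option) set" where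
  "BK X M d K f \<epsilon> = {g \<in> Cod_star X M d. K \<subseteq> dom g \<and> dK d K f g < \<epsilon>}"

definition tau_cc :: "'a topology \<Rightarrow> 'b set \<Rightarrow> ('b \<Rightarrow> 'b \<Rightarrow> real) \<Rightarrow> ('a \<Rightarrow> 'b option) topology" where
  "tau_cc X M d = topology_generated_by
     (insert (Cod X M d)
       {BK X M d K f \<epsilon> | K f \<epsilon>. f \<in> Cod_star X M d \<and> compactin X K \<and> K \<noteq> {} \<and>
                              K \<subseteq> dom f \<and> \<epsilon> > 0})"

end

theory Submission
  imports Defs
begin

(* Each subbasic set <K,V> is a union of balls B_K(f,e): if f(K) lies in V, then so does the
   e-neighbourhood of the compact set f(K) for some e > 0.  Conversely, if g lies in B_K(f,e) and
   r = (e - d_K(f,g))/4, then compactness of K gives finitely many points y_i of K such that the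
   compact sets C_i = K \<inter> g^-1(cball(g y_i, r)) cover K; the compact-open neighbourhood
   \<Inter>_i <C_i, ball(g y_i, 2r)> of g then lies in B_K(f,e).  The empty compact set yields C_od
   itself as a subbasic set of both topologies. *)

lemma topology_generated_by_coarsest:
  assumes "\<And>S. S \<in> \<S> \<Longrightarrow> openin T S" and "openin (topology_generated_by \<S>) U"
  shows "openin T U"
  using istopology_openin assms(1) openin_topology_generated_by[OF assms(2)]
  by (rule generate_topology_on_coarsest)

lemma topology_generated_by_eqI:
  assumes "\<And>S. S \<in> \<S> \<Longrightarrow> openin (topology_generated_by \<T>) S"
    and "\<And>T. T \<in> \<T> \<Longrightarrow> openin (topology_generated_by \<S>) T"
  shows "topology_generated_by \<S> = topology_generated_by \<T>"
  unfolding topology_eq using assms by (blast intro: topology_generated_by_coarsest)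

context Metric_space
begin

lemma compactin_uniform_mball_subset:
  assumes "compactin mtopology C" "C \<subseteq> V" "openin mtopology V"
  obtains e where "e > 0" "\<And>y. y \<in> C \<Longrightarrow> mball y e \<subseteq> V"
proof -
  have "\<exists>r>0. mball y (2 * r) \<subseteq> V" if "y \<in> C" for y
  proof -
    obtain r where "r > 0" "mball y r \<subseteq> V"
      using assms(2,3) \<open>y \<in> C\<close> openin_mtopology by blast
    then show ?thesis by (intro exI[of _ "r/2"]) auto
  qed
  then obtain r where r: "\<And>y. y \<in> C \<Longrightarrow> r y > 0 \<and> mball y (2 * r y) \<subseteq> V" by metis
  have "C \<subseteq> (\<Union>y\<in>C. mball y (r y))"
    using r compactin_subset_topspace[OF assms(1)] by fastforce
  then obtain G where G: "finite G" "G \<subseteq> C" "C \<subseteq> (\<Union>y\<in>G. mball y (r y))"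
    using compactinD[OF assms(1)] finite_subset_image
    by (smt (verit, ccfv_threshold) imageE openin_mball)
  define e where "e = Min (insert 1 (r ` G))"
  have "e > 0" unfolding e_def using G r by auto
  moreover have "mball z e \<subseteq> V" if "z \<in> C" for z
  proof -
    obtain y where y: "y \<in> G" "z \<in> mball y (r y)" using G \<open>z \<in> C\<close> by auto
    have "e \<le> r y" unfolding e_def using G y by auto
    then have "mball z e \<subseteq> mball y (2 * r y)"
      using y by (intro mball_subset) (auto simp: commute)
    then show ?thesis using r y G by blast
  qed
  ultimately show thesis using that by blast
qed

lemma compactin_preimage_mcball:
  assumes "compactin X K" "continuous_map (subtopology X K) mtopology g"
  shows "compactin X {x \<in> K. g x \<in> mcball c r}"
proof -
  have "topspace (subtopology X K) = K"
    using compactin_subset_topspace[OF assms(1)] by auto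
  then have "closedin (subtopology X K) {x \<in> K. g x \<in> mcball c r}"
    using closedin_continuous_map_preimage[OF assms(2) closedin_mcball] by simp
  then have "compactin (subtopology X K) {x \<in> K. g x \<in> mcball c r}"
    using closedin_compact_space compact_space_subtopology[OF assms(1)] by blast
  then show ?thesis using compactin_subtopology by blast
qed

lemma compactin_finite_mball_preimage_cover:
  assumes "compactin X K" "continuous_map (subtopology X K) mtopology g" "r > 0"
  obtains G where "finite G" "G \<subseteq> K" "K \<subseteq> (\<Union>y\<in>G. {x \<in> K. g x \<in> mball (g y) r})"
proof -
  have tsK: "topspace (subtopology X K) = K"
    using compactin_subset_topspace[OF assms(1)] by auto
  have "openin (subtopology X K) {x \<in> K. g x \<in> mball (g y) r}" for y
    using openin_continuous_map_preimage[OF assms(2)] tsK by (metis openin_mball)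
  moreover have "K \<subseteq> (\<Union>y\<in>K. {x \<in> K. g x \<in> mball (g y) r})"
    using continuous_map_image_subset_topspace[OF assms(2)] tsK \<open>r > 0\<close> by fastforce
  moreover have "compactin (subtopology X K) K"
    using assms(1) by (simp add: compactin_subtopology)
  ultimately show thesis
    using that compactinD finite_subset_image by (smt (verit) imageE)
qed

lemma Cod_continuous_map_on:
  assumes "f \<in> Cod X M d" "K \<subseteq> dom f"
  shows "continuous_map (subtopology X K) mtopology (\<lambda>x. the (f x))"
  using assms unfolding Cod_def by (auto intro: continuous_map_from_subtopology_mono)

lemma Cod_in_mspace:
  assumes "f \<in> Cod X M d" "x \<in> dom f"
  shows "the (f x) \<in> M"
proof -
  have "openin X (dom f)"
    and "continuous_map (subtopology X (dom f)) mtopology (\<lambda>x. the (f x))"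
    using assms(1) unfolding Cod_def by auto
  then show ?thesis
    using assms(2) openin_subset continuous_map_image_subset_topspace by fastforce
qed

lemma compactin_Cod_image:
  assumes "f \<in> Cod X M d" "K \<subseteq> dom f" "compactin X K"
  shows "compactin mtopology ((\<lambda>x. the (f x)) ` K)"
  using image_compactin Cod_continuous_map_on[OF assms(1,2)] assms(3)
  by (metis compactin_subtopology order.refl)

lemma bdd_above_dist_Cod:
  assumes "f \<in> Cod X M d" "g \<in> Cod X M d" "compactin X K" "K \<subseteq> dom f" "K \<subseteq> dom g"
  shows "bdd_above ((\<lambda>x. d (the (f x)) (the (g x))) ` K)"
proof -
  obtain c B where cB: "(\<lambda>x. the (f x)) ` K \<subseteq> mcball c B"
    using compactin_imp_mbounded[OF compactin_Cod_image[OF assms(1,4,3)]]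
    unfolding mbounded_def by blast
  obtain c' B' where cB': "(\<lambda>x. the (g x)) ` K \<subseteq> mcball c' B'"
    using compactin_imp_mbounded[OF compactin_Cod_image[OF assms(2,5,3)]]
    unfolding mbounded_def by blast
  have "d (the (f x)) (the (g x)) \<le> B + d c c' + B'" if "x \<in> K" for x
  proof -
    have fx: "the (f x) \<in> mcball c B" and gx: "the (g x) \<in> mcball c' B'"
      using \<open>x \<in> K\<close> cB cB' by auto
    have "d (the (f x)) (the (g x)) \<le> d (the (f x)) c + (d c c' + d c' (the (g x)))"
      using fx gx triangle by (smt (verit) in_mcball)
    also have "\<dots> \<le> B + d c c' + B'" using fx gx by (auto simp: commute)
    finally show ?thesis .
  qed
  then show ?thesis unfolding bdd_above_def by blast
qed

lemma dist_le_dK: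
  assumes "f \<in> Cod X M d" "g \<in> Cod X M d" "compactin X K" "K \<subseteq> dom f" "K \<subseteq> dom g"
    and "x \<in> K"
  shows "d (the (f x)) (the (g x)) \<le> dK d K f g"
  unfolding dK_def using bdd_above_dist_Cod[OF assms(1-5)] assms(6) by (rule cSUP_upper2) auto

lemma dK_self:
  assumes "f \<in> Cod X M d" "K \<subseteq> dom f" "K \<noteq> {}"
  shows "dK d K f f = 0"
proof -
  have "dK d K f f = (SUP x\<in>K. 0)"
    unfolding dK_def using assms(2) Cod_in_mspace[OF assms(1)] by (intro SUP_cong) (auto simp: subset_iff)
  then show ?thesis using assms(3) by simp
qed

lemma openin_tau_co_co_sub:
  assumes "compactin X K" "openin mtopology V"
  shows "openin (tau_co X M d) (co_sub X M d K V)"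
  unfolding tau_co_def using assms by (intro topology_generated_by_Basis) blast

lemma openin_tau_co_Cod: "openin (tau_co X M d) (Cod X M d)"
proof -
  have "co_sub X M d {} {} = Cod X M d" unfolding co_sub_def by auto
  then show ?thesis by (metis openin_tau_co_co_sub compactin_empty openin_empty)
qed

lemma openin_tau_cc_Cod: "openin (tau_cc X M d) (Cod X M d)"
  unfolding tau_cc_def by (rule topology_generated_by_Basis) simp

lemma openin_tau_cc_BK:
  assumes "f \<in> Cod_star X M d" "compactin X K" "K \<noteq> {}" "K \<subseteq> dom f" "e > 0"
  shows "openin (tau_cc X M d) (BK X M d K f e)"
  unfolding tau_cc_def using assms by (intro topology_generated_by_Basis) blast

lemma openin_tau_cc_co_sub:
  assumes K: "compactin X K" and V: "openin mtopology V"
  shows "openin (tau_cc X M d) (co_sub X M d K V)"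
proof (cases "K = {}")
  case True
  then have "co_sub X M d K V = Cod X M d" unfolding co_sub_def by auto
  then show ?thesis using openin_tau_cc_Cod by simp
next
  case False
  show ?thesis
  proof (subst openin_subopen, intro ballI)
    fix f assume "f \<in> co_sub X M d K V"
    then have fC: "f \<in> Cod X M d" and Kf: "K \<subseteq> dom f" and fV: "(\<lambda>x. the (f x)) ` K \<subseteq> V"
      unfolding co_sub_def by auto
    have fCs: "f \<in> Cod_star X M d" using fC Kf False unfolding Cod_star_def by auto
    obtain e where e: "e > 0" "\<And>y. y \<in> (\<lambda>x. the (f x)) ` K \<Longrightarrow> mball y e \<subseteq> V"
      using compactin_uniform_mball_subset[OF compactin_Cod_image[OF fC Kf K] fV V] by blast
    have "f \<in> BK X M d K f e"
      unfolding BK_def using fCs Kf e dK_self[OF fC Kf False] by auto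
    moreover have "BK X M d K f e \<subseteq> co_sub X M d K V"
    proof
      fix g assume "g \<in> BK X M d K f e"
      then have gC: "g \<in> Cod X M d" and Kg: "K \<subseteq> dom g" and lt: "dK d K f g < e"
        unfolding BK_def Cod_star_def by auto
      have "the (g x) \<in> mball (the (f x)) e" if "x \<in> K" for x
        using dist_le_dK[OF fC gC K Kf Kg that] lt that Kf Kg
          Cod_in_mspace[OF fC] Cod_in_mspace[OF gC] by fastforce
      then show "g \<in> co_sub X M d K V" unfolding co_sub_def using gC Kg e by blast
    qed
    ultimately show "\<exists>T. openin (tau_cc X M d) T \<and> f \<in> T \<and> T \<subseteq> co_sub X M d K V"
      using openin_tau_cc_BK[OF fCs K False Kf \<open>e > 0\<close>] by blast
  qed
qed

lemma openin_tau_co_BK: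
  assumes fCs: "f \<in> Cod_star X M d" and K: "compactin X K" and "K \<noteq> {}" and Kf: "K \<subseteq> dom f"
  shows "openin (tau_co X M d) (BK X M d K f e)"
proof (subst openin_subopen, intro ballI)
  have fC: "f \<in> Cod X M d" using fCs unfolding Cod_star_def by auto
  fix g assume "g \<in> BK X M d K f e"
  then have gC: "g \<in> Cod X M d" and Kg: "K \<subseteq> dom g" and "dK d K f g < e"
    unfolding BK_def Cod_star_def by auto
  define r where "r = (e - dK d K f g) / 4"
  have "r > 0" using \<open>dK d K f g < e\<close> unfolding r_def by simp
  define gg where "gg x = the (g x)" for x
  have gg_cont: "continuous_map (subtopology X K) mtopology gg"
    unfolding gg_def[abs_def] using Cod_continuous_map_on[OF gC Kg] .
  obtain G where G: "finite G" "G \<subseteq> K" "K \<subseteq> (\<Union>y\<in>G. {x \<in> K. gg x \<in> mball (gg y) r})"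
    using compactin_finite_mball_preimage_cover[OF K gg_cont \<open>r > 0\<close>] by blast
  define C where "C y = {x \<in> K. gg x \<in> mcball (gg y) r}" for y
  define N where "N = Cod X M d \<inter> (\<Inter>y\<in>G. co_sub X M d (C y) (mball (gg y) (2 * r)))"
  have "openin (tau_co X M d) N"
  proof -
    let ?A = "\<Inter>y\<in>G. co_sub X M d (C y) (mball (gg y) (2 * r))"
    have "openin (tau_co X M d) (?A \<inter> topspace (tau_co X M d))"
      unfolding C_def
      using G by (intro openin_INT openin_tau_co_co_sub compactin_preimage_mcball[OF K gg_cont]) auto
    moreover have "N = Cod X M d \<inter> (?A \<inter> topspace (tau_co X M d))"
      unfolding N_def using openin_subset[OF openin_tau_co_Cod] by blast
    ultimately show ?thesis using openin_tau_co_Cod by auto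
  qed
  moreover have "g \<in> N"
    unfolding N_def co_sub_def C_def using gC Kg \<open>r > 0\<close> by (auto simp: gg_def)
  moreover have "N \<subseteq> BK X M d K f e"
  proof
    fix h assume h: "h \<in> N"
    then have hC: "h \<in> Cod X M d" unfolding N_def by auto
    have near: "\<exists>y\<in>G. x \<in> C y \<and> x \<in> dom h \<and> gg x \<in> mball (gg y) r \<and>
                        the (h x) \<in> mball (gg y) (2 * r)" if "x \<in> K" for x
      using G(3) \<open>x \<in> K\<close> h unfolding N_def co_sub_def C_def
      by (fastforce dest: mball_subset_mcball[THEN subsetD])
    then have Kh: "K \<subseteq> dom h" by blast
    have "d (the (f x)) (the (h x)) \<le> dK d K f g + 3 * r" if "x \<in> K" for x
    proof -
      obtain y where y: "gg x \<in> mball (gg y) r" "the (h x) \<in> mball (gg y) (2 * r)"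
        using near[OF \<open>x \<in> K\<close>] by blast
      have "d (the (f x)) (gg x) \<le> dK d K f g"
        unfolding gg_def using dist_le_dK[OF fC gC K Kf Kg \<open>x \<in> K\<close>] .
      moreover have "the (f x) \<in> M" using Cod_in_mspace[OF fC] Kf \<open>x \<in> K\<close> by blast
      ultimately show ?thesis
        using y triangle[of "the (f x)" "gg x" "the (h x)"] triangle[of "gg x" "gg y" "the (h x)"]
        by (auto simp: commute)
    qed
    then have "dK d K f h \<le> dK d K f g + 3 * r"
      unfolding dK_def[of d K f h] using \<open>K \<noteq> {}\<close> by (intro cSUP_least) auto
    also have "\<dots> < e" unfolding r_def using \<open>dK d K f g < e\<close> by (simp add: field_simps)
    finally show "h \<in> BK X M d K f e"
      unfolding BK_def Cod_star_def using hC Kh \<open>K \<noteq> {}\<close> by auto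
  qed
  ultimately show "\<exists>T. openin (tau_co X M d) T \<and> g \<in> T \<and> T \<subseteq> BK X M d K f e"
    by blast
qed

end

theorem mainTheorem5:
  fixes X :: "'a topology" and M :: "'b set" and d :: "'b \<Rightarrow> 'b \<Rightarrow> real"
  assumes "locally_compact_space X" and "Hausdorff_space X" and "second_countable X"
    and "Metric_space M d"
  shows "tau_co X M d = tau_cc X M d"
proof -
  interpret Metric_space M d by (rule assms(4))
  have "openin (tau_cc X M d) S"
    if "S \<in> {co_sub X M d K V | K V. compactin X K \<and> openin mtopology V}" for S
    using that openin_tau_cc_co_sub by blast
  moreover have "openin (tau_co X M d) T"
    if "T \<in> insert (Cod X M d) {BK X M d K f e | K f e. f \<in> Cod_star X M d \<and> compactin X K \<and>
                                  K \<noteq> {} \<and> K \<subseteq> dom f \<and> e > 0}" for T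
    using that openin_tau_co_Cod openin_tau_co_BK by blast
  ultimately show ?thesis
    unfolding tau_co_def tau_cc_def by (rule topology_generated_by_eqI)
qed

end
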